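(* The Kirch space $(\mathbb{N},\tau_K)$ is topologically rigid, i.e. the only homeomorphism $h:\mathbb{N}\to\mathbb{N}$ of the Kirch space onto itself is the identity map.
   Context: $\mathbb{N}=\{1,2,3,\dots\}$ and $\mathbb{N}_0=\{0\}\cup\mathbb{N}$. For $a,b\in\mathbb{N}$ let $a+b\mathbb{N}_0=\{a+bn:n\in\mathbb{N}_0\}$. A number $b$ is square-free if it is not divisible by the square of a prime. The Kirch topology $\tau_K$ on $\mathbb{N}$ is the topology generated by the base consisting of all arithmetic progressions $a+b\mathbb{N}_0$ where $a,b\in\mathbb{N}$ are coprime and $b$ is square-free (equivalently, generated by the subbase of all $a+p\mathbb{N}_0$ with $p$ prime and $a\in\mathbb{N}$ not divisible by $p$). The Kirch space is $(\mathbb{N},\tau_K)$. A topological space is topologically rigid if its homeomorphism group is trivial. *)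

theory Defs
  imports "HOL-Analysis.Analysis" "HOL-Computational_Algebra.Squarefree"
begin

definition arith_prog :: "nat \<Rightarrow> nat \<Rightarrow> nat set" where
  "arith_prog a b = {a + b * n | n. True}"

definition kirch_base :: "nat set set" where
  "kirch_base = {arith_prog a b | a b. a \<ge> 1 \<and> b \<ge> 1 \<and> coprime a b \<and> squarefree b}"

text \<open>The Kirch space: carrier N = {1,2,...} (the union of the base), topology generated by the base.\<close>
definition kirch_topology :: "nat topology" where
  "kirch_topology = topology_generated_by kirch_base"

end

(*
  A homeomorphism of the Kirch space is detected through the ternary relation closure_linked:
  z is linked to x and y if every neighbourhood W of z admits neighbourhoods U of x and V of y
  with cl U \<inter> cl V \<subseteq> cl W. In the Kirch space this relation is arithmetic: at every odd
  prime q dividing x, y or x - y, the point z is divisible by q or congruent to x or to y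
  modulo q. For an odd prime p the points linked to p and 2 p are exactly the multiples of p.
  These have empty interior, whereas the points linked to two distinct points x and y form a
  set with nonempty interior unless some odd prime divides both x and y; so a homeomorphism
  permutes the sets of multiples of odd primes. Residue classes modulo p are open and the
  closures of two distinct ones meet only in multiples of p; hence congruence modulo odd
  primes is preserved up to that permutation.
  A homeomorphism therefore preserves the powers of two (no odd prime factor) and the relation
  of differing by a power of two (no odd prime modulus of congruence). A bijection of the
  positive integers with these properties fixes 1, the only power of two with a single
  power-of-two neighbour among the powers of two, then 2, and then each x \<ge> 3, whose image
  must differ from both x - 1 and x - 2 by powers of two.
*)

theory Submission
  imports Defs "HOL-Number_Theory.Cong"
begin

section \<open>Arithmetic progressions and squarefree moduli\<close>

lemma arith_prog_iff_cong: "w \<in> arith_prog x b \<longleftrightarrow> x \<le> w \<and> [w = x] (mod b)"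
  by (auto simp: arith_prog_def cong_le_nat algebra_simps)

lemma arith_prog_self: "x \<in> arith_prog x b"
  by (simp add: arith_prog_iff_cong)

lemma arith_prog_subset:
  assumes "w \<in> arith_prog x b" "b' dvd b"
  shows "arith_prog w b \<subseteq> arith_prog x b'"
  using assms by (auto simp: arith_prog_iff_cong) (meson cong_trans cong_dvd_modulus_nat)

lemma arith_prog_mono: "b' dvd b \<Longrightarrow> arith_prog x b \<subseteq> arith_prog x b'"
  by (rule arith_prog_subset[OF arith_prog_self])

lemma coprime_arith_prog:
  assumes "w \<in> arith_prog x b" "coprime x b"
  shows "coprime w b"
  using assms coprime_cong_cong_left by (auto simp: arith_prog_iff_cong)

lemma coprime_prime_not_dvd:
  fixes a b p :: "'a :: normalization_semidom"
  assumes "coprime a b" "prime p" "p dvd b"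
  shows "\<not> p dvd a"
  using assms coprime_common_divisor not_prime_unit by blast

lemma arith_progs_intersect_le:
  fixes z w d e :: nat
  assumes "z \<le> w" "0 < d" "0 < e" "[z = w] (mod gcd d e)"
  shows "arith_prog z d \<inter> arith_prog w e \<noteq> {}"
proof -
  have "gcd d e dvd w - z"
    using assms by (simp add: cong_altdef_nat cong_sym_eq)
  then obtain n where n: "[d * n = w - z] (mod e)"
    using cong_solve_dvd_nat by blast
  \<comment> \<open>the summand \<open>d * e * w\<close> does not change \<open>t mod e\<close> and ensures \<open>w \<le> t\<close>\<close>
  define t where "t = z + d * (n + e * w)"
  have "w \<le> e * w"
    using assms(3) by simp
  also have "\<dots> \<le> n + e * w"
    by simp
  also have "\<dots> \<le> d * (n + e * w)"
    using assms(2) by simp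
  finally have "w \<le> t"
    by (simp add: t_def)
  have "t = (z + d * n) + e * (d * w)"
    by (simp add: t_def algebra_simps)
  then have "[t = z + d * n] (mod e)"
    by (simp add: cong_def)
  also have "[z + d * n = z + (w - z)] (mod e)"
    using n by (rule cong_add_lcancel_nat[THEN iffD2])
  finally have "[t = w] (mod e)"
    using assms(1) by simp
  moreover have "[t = z] (mod d)"
    by (simp add: t_def cong_def)
  ultimately have "t \<in> arith_prog z d \<inter> arith_prog w e"
    using \<open>w \<le> t\<close> by (simp add: arith_prog_iff_cong t_def)
  then show ?thesis
    by blast
qed

lemma arith_progs_intersect:
  fixes z w d e :: nat
  assumes "0 < d" "0 < e" "[z = w] (mod gcd d e)"
  shows "arith_prog z d \<inter> arith_prog w e \<noteq> {}"
proof (cases "z \<le> w")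
  case True
  then show ?thesis
    using arith_progs_intersect_le assms by blast
next
  case False
  then show ?thesis
    using arith_progs_intersect_le[of w z e d] assms by (auto simp: gcd.commute cong_sym_eq)
qed

lemma squarefree_lcm:
  fixes a b :: "'a :: factorial_semiring_gcd"
  assumes "squarefree a" "squarefree b"
  shows "squarefree (lcm a b)"
proof -
  have "a \<noteq> 0" "b \<noteq> 0"
    using assms by auto
  then show ?thesis
    using assms by (simp add: squarefree_factorial_semiring'' multiplicity_lcm lcm_eq_0_iff)
qed

lemma squarefree_dvdI:
  fixes g n :: "'a :: factorial_semiring"
  assumes "squarefree g" "\<And>p. prime p \<Longrightarrow> p dvd g \<Longrightarrow> p dvd n"
  shows "g dvd n"
proof (cases "n = 0")
  case False
  have "g \<noteq> 0"
    using assms(1) by auto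
  then show ?thesis
  proof (rule multiplicity_le_imp_dvd)
    fix p :: 'a
    assume "prime p"
    show "multiplicity p g \<le> multiplicity p n"
    proof (cases "p dvd g")
      case True
      then have "1 \<le> multiplicity p n"
        using assms(2) \<open>prime p\<close> False by (simp add: prime_multiplicity_gt_zero_iff Suc_le_eq)
      moreover have "multiplicity p g \<le> 1"
        using assms(1) \<open>g \<noteq> 0\<close> \<open>prime p\<close> squarefree_factorial_semiring'' by blast
      ultimately show ?thesis
        by linarith
    qed (simp add: not_dvd_imp_multiplicity_0)
  qed
qed simp

lemma cong_squarefree_modulus:
  fixes a b g :: nat
  assumes "squarefree g" "\<And>p. prime p \<Longrightarrow> p dvd g \<Longrightarrow> [a = b] (mod p)"
  shows "[a = b] (mod g)"
proof -
  have "[a = b] (mod g)" if "b \<le> a" "\<And>p. prime p \<Longrightarrow> p dvd g \<Longrightarrow> [a = b] (mod p)" for a b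
    using that by (simp add: cong_altdef_nat squarefree_dvdI[OF assms(1)])
  then show ?thesis
    using assms(2) by (metis cong_sym_eq nat_le_linear)
qed

lemma odd_prime_avoiding_residue:
  fixes q z :: nat
  assumes "prime q" "odd q"
  obtains t where "\<not> q dvd t" "\<not> [t = z] (mod q)"
proof -
  have "2 < q"
    using prime_ge_2_nat[OF assms(1)] assms(2) by (cases "q = 2") auto
  then have "\<not> q dvd 1" "\<not> q dvd 2" "\<not> [2 = 1] (mod q)"
    by (auto simp: cong_def dest: dvd_imp_le)
  show thesis
  proof (cases "[1 = z] (mod q)")
    case True
    then have "\<not> [2 = z] (mod q)"
      using \<open>\<not> [2 = 1] (mod q)\<close> cong_trans[OF _ cong_sym[OF True]] by blast
    then show thesis
      using that \<open>\<not> q dvd 2\<close> by blast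
  qed (use that \<open>\<not> q dvd 1\<close> in blast)
qed

section \<open>The Kirch topology\<close>

lemma topspace_kirch: "topspace kirch_topology = {1..}"
proof -
  have "\<Union>kirch_base = {1..}"
  proof
    show "\<Union>kirch_base \<subseteq> {1..}"
      by (auto simp: kirch_base_def arith_prog_def)
    show "{1..} \<subseteq> \<Union>kirch_base"
    proof
      fix n :: nat
      assume "n \<in> {1..}"
      then have "arith_prog n 1 \<in> kirch_base"
        by (force simp: kirch_base_def)
      then show "n \<in> \<Union>kirch_base"
        using arith_prog_self by blast
    qed
  qed
  then show ?thesis
    by (simp add: kirch_topology_def)
qed

lemma openin_kirch_arith_prog:
  assumes "1 \<le> a" "0 < b" "coprime a b" "squarefree b"
  shows "openin kirch_topology (arith_prog a b)"
  unfolding kirch_topology_def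
  by (rule topology_generated_by_Basis) (use assms in \<open>force simp: kirch_base_def\<close>)

lemma kirch_neighbourhood:
  assumes "openin kirch_topology U" "x \<in> U"
  obtains b where "0 < b" "squarefree b" "coprime x b" "arith_prog x b \<subseteq> U"
proof -
  have "generate_topology_on kirch_base U"
    using assms(1) by (simp add: kirch_topology_def openin_topology_generated_by_iff)
  then have "\<exists>b>0. squarefree b \<and> coprime x b \<and> arith_prog x b \<subseteq> U"
    using assms(2)
  proof (induction arbitrary: x)
    case (Int S T)
    obtain b1 where b1: "0 < b1" "squarefree b1" "coprime x b1" "arith_prog x b1 \<subseteq> S"
      using Int.IH(1) Int.prems by auto
    obtain b2 where b2: "0 < b2" "squarefree b2" "coprime x b2" "arith_prog x b2 \<subseteq> T"
      using Int.IH(2) Int.prems by auto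
    have "0 < lcm b1 b2"
      using b1(1) b2(1) by (simp add: lcm_pos_nat)
    have "coprime x (b1 * b2)"
      using b1(3) b2(3) by simp
    moreover have "lcm b1 b2 dvd b1 * b2"
      by (simp add: lcm_least)
    ultimately have "coprime x (lcm b1 b2)"
      using coprime_divisors[OF dvd_refl] by blast
    moreover have "arith_prog x (lcm b1 b2) \<subseteq> S \<inter> T"
      using arith_prog_mono[of b1 "lcm b1 b2" x] arith_prog_mono[of b2 "lcm b1 b2" x] b1(4) b2(4)
      by auto
    ultimately show ?case
      using \<open>0 < lcm b1 b2\<close> squarefree_lcm[OF b1(2) b2(2)] by (intro exI[of _ "lcm b1 b2"]) simp
  next
    case (UN K)
    then obtain k where "k \<in> K" "x \<in> k"
      by blast
    then obtain b where "0 < b" "squarefree b" "coprime x b" "arith_prog x b \<subseteq> k"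
      using UN.IH by blast
    then show ?case
      using \<open>k \<in> K\<close> by (intro exI[of _ b]) auto
  next
    case (Basis S)
    then obtain a b where S: "S = arith_prog a b" "0 < b" "coprime a b" "squarefree b"
      by (auto simp: kirch_base_def)
    then have "x \<in> arith_prog a b"
      using Basis.prems by simp
    then have "coprime x b" "arith_prog x b \<subseteq> S"
      using S(1,3) coprime_arith_prog arith_prog_subset[OF _ dvd_refl] by auto
    then show ?case
      using S(2,4) by blast
  qed simp
  then show thesis
    using that by blast
qed

definition residue_class :: "nat \<Rightarrow> nat \<Rightarrow> nat set" where
  "residue_class q a = {w. 1 \<le> w \<and> [w = a] (mod q)}"

definition residue_system :: "nat set \<Rightarrow> (nat \<Rightarrow> nat) \<Rightarrow> nat set" where
  "residue_system Q a = {w. 1 \<le> w \<and> (\<forall>q\<in>Q. [w = a q] (mod q))}"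

lemma in_residue_class_0_iff: "w \<in> residue_class p 0 \<longleftrightarrow> 1 \<le> w \<and> p dvd w"
  by (simp add: residue_class_def cong_0_iff)

lemma openin_kirch_residue_class:
  assumes "prime q" "\<not> q dvd a"
  shows "openin kirch_topology (residue_class q a)"
proof -
  have "openin kirch_topology (arith_prog x q)" if "x \<in> residue_class q a" for x
  proof (rule openin_kirch_arith_prog)
    have "\<not> q dvd x"
      using that assms(2) cong_dvd_iff by (auto simp: residue_class_def)
    then show "coprime x q"
      using assms(1) by (simp add: prime_imp_coprime coprime_commute)
  qed (use that assms(1) in \<open>auto simp: residue_class_def prime_gt_0_nat squarefree_prime\<close>)
  then have "openin kirch_topology (\<Union>x\<in>residue_class q a. arith_prog x q)"
    by blast
  moreover have "(\<Union>x\<in>residue_class q a. arith_prog x q) = residue_class q a"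
  proof (intro equalityI subsetI)
    fix w
    assume "w \<in> (\<Union>x\<in>residue_class q a. arith_prog x q)"
    then obtain x where "x \<in> residue_class q a" "x \<le> w" "[w = x] (mod q)"
      by (auto simp: arith_prog_iff_cong)
    then show "w \<in> residue_class q a"
      by (auto simp: residue_class_def dest: cong_trans[OF \<open>[w = x] (mod q)\<close>])
  qed (use arith_prog_self in blast)
  ultimately show ?thesis
    by simp
qed

lemma openin_kirch_residue_system:
  assumes "finite Q" "\<And>q. q \<in> Q \<Longrightarrow> prime q \<and> \<not> q dvd a q"
  shows "openin kirch_topology (residue_system Q a)"
proof -
  have "residue_system Q a = (\<Inter>q\<in>Q. residue_class q (a q)) \<inter> topspace kirch_topology"
    by (auto simp: residue_system_def residue_class_def topspace_kirch)
  then show ?thesis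
    using assms openin_kirch_residue_class by (simp add: openin_INT)
qed

lemma residue_system_nonempty:
  assumes "finite Q" "\<And>q. q \<in> Q \<Longrightarrow> prime q"
  shows "residue_system Q a \<noteq> {}"
proof -
  obtain z where z: "\<forall>q\<in>Q. [z = a q] (mod q)"
    using chinese_remainder_nat[OF assms(1), of id a] assms(2) by (auto simp: primes_coprime)
  have "0 < \<Prod>Q"
    using assms by (simp add: prime_gt_0_nat prod_pos)
  moreover have "[z + \<Prod>Q = a q] (mod q)" if "q \<in> Q" for q
  proof -
    have "[z + \<Prod>Q = z + 0] (mod q)"
      using assms(1) that dvd_prodI[of Q q "\<lambda>x. x"]
      by (intro cong_add_lcancel_nat[THEN iffD2]) (simp add: cong_0_iff)
    then have "[z + \<Prod>Q = z] (mod q)"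
      by simp
    then show ?thesis
      using cong_trans z that by blast
  qed
  ultimately have "z + \<Prod>Q \<in> residue_system Q a"
    by (simp add: residue_system_def)
  then show ?thesis
    by blast
qed

lemma kirch_closure_subset_residue_class:
  assumes "prime q" "S \<subseteq> residue_class q a"
  shows "kirch_topology closure_of S \<subseteq> residue_class q a \<union> residue_class q 0"
proof
  fix w
  assume w: "w \<in> kirch_topology closure_of S"
  then have "1 \<le> w"
    using closure_of_subset_topspace topspace_kirch by fastforce
  show "w \<in> residue_class q a \<union> residue_class q 0"
  proof (cases "q dvd w")
    case False
    then have "openin kirch_topology (arith_prog w q)"
      using \<open>1 \<le> w\<close> assms(1)
      by (intro openin_kirch_arith_prog) (auto simp: prime_gt_0_nat squarefree_prime prime_imp_coprime coprime_commute)
    then obtain y where "y \<in> S" "y \<in> arith_prog w q"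
      using w arith_prog_self unfolding in_closure_of by blast
    then have "[w = y] (mod q)" "[y = a] (mod q)"
      using assms(2) by (auto simp: arith_prog_iff_cong residue_class_def cong_sym_eq)
    then have "[w = a] (mod q)"
      by (rule cong_trans)
    then show ?thesis
      using \<open>1 \<le> w\<close> by (simp add: residue_class_def)
  qed (use \<open>1 \<le> w\<close> in \<open>simp add: in_residue_class_0_iff\<close>)
qed

lemma in_kirch_closure_arith_prog:
  assumes "squarefree d" "1 \<le> w" "\<And>r. prime r \<Longrightarrow> r dvd d \<Longrightarrow> r dvd w \<or> [w = z] (mod r)"
  shows "w \<in> kirch_topology closure_of arith_prog z d"
  unfolding in_closure_of
proof (intro conjI allI impI)
  show "w \<in> topspace kirch_topology"
    using assms(2) by (simp add: topspace_kirch)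
  fix T
  assume T: "w \<in> T \<and> openin kirch_topology T"
  then obtain e where e: "0 < e" "squarefree e" "coprime w e" "arith_prog w e \<subseteq> T"
    using kirch_neighbourhood by blast
  have "[z = w] (mod gcd d e)"
  proof (rule cong_squarefree_modulus)
    show "squarefree (gcd d e)"
      using assms(1) squarefree_mono by blast
    fix r :: nat
    assume r: "prime r" "r dvd gcd d e"
    then have "\<not> r dvd w"
      using coprime_prime_not_dvd[OF e(3)] by (meson dvd_trans gcd_dvd2)
    then show "[z = w] (mod r)"
      using assms(3) r by (meson cong_sym dvd_trans gcd_dvd1)
  qed
  then have "arith_prog z d \<inter> arith_prog w e \<noteq> {}"
    using assms(1) e(1) by (intro arith_progs_intersect) (auto intro: Nat.gr0I)
  then show "\<exists>y. y \<in> arith_prog z d \<and> y \<in> T"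
    using e(4) by blast
qed

lemma cong_prime_and_dvd_other_primes:
  fixes q t n :: nat
  assumes "prime q" "\<not> q dvd t" "n \<noteq> 0"
  obtains w where "1 \<le> w" "[w = t] (mod q)" "\<And>r. prime r \<Longrightarrow> r dvd n \<Longrightarrow> r \<noteq> q \<Longrightarrow> r dvd w"
proof -
  define P where "P = insert q (prime_factors n)"
  have "\<forall>r\<in>P. prime r"
    using assms(1) by (auto simp: P_def in_prime_factors_iff)
  then have "\<forall>i\<in>P. \<forall>j\<in>P. i \<noteq> j \<longrightarrow> coprime i j"
    by (simp add: primes_coprime)
  then obtain w where w: "\<forall>r\<in>P. [w = (if r = q then t else 0)] (mod r)"
    using chinese_remainder_nat[of P "\<lambda>r. r" "\<lambda>r. if r = q then t else 0"] by (auto simp: P_def)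
  then have "[w = t] (mod q)"
    by (simp add: P_def)
  moreover from this have "1 \<le> w"
    using assms(2) cong_dvd_iff by (cases w) auto
  moreover have "r dvd w" if "prime r" "r dvd n" "r \<noteq> q" for r
  proof -
    have "r \<in> P"
      using that assms(3) by (auto simp: P_def in_prime_factors_iff)
    then show ?thesis
      using w that(3) by (auto simp: cong_0_iff)
  qed
  ultimately show thesis
    using that by blast
qed

lemma common_kirch_closure_point:
  assumes "prime q" "squarefree b" "squarefree c" "\<not> q dvd t"
    "q dvd b \<Longrightarrow> [t = x] (mod q)" "q dvd c \<Longrightarrow> [t = y] (mod q)"
  obtains w where "[w = t] (mod q)"
    "w \<in> kirch_topology closure_of arith_prog x b" "w \<in> kirch_topology closure_of arith_prog y c"
proof -
  have "b * c \<noteq> 0"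
    using assms(2,3) by (metis mult_eq_0_iff not_squarefree_0)
  then obtain w where w: "1 \<le> w" "[w = t] (mod q)"
    and divides: "\<And>r. prime r \<Longrightarrow> r dvd b * c \<Longrightarrow> r \<noteq> q \<Longrightarrow> r dvd w"
    using cong_prime_and_dvd_other_primes[OF assms(1,4)] by blast
  have "r dvd w \<or> [w = x] (mod r)" if "prime r" "r dvd b" for r
  proof (cases "r = q")
    case True
    then show ?thesis
      using that(2) cong_trans[OF w(2) assms(5)] by blast
  qed (use divides[OF that(1) dvd_mult2[OF that(2)]] in blast)
  moreover have "r dvd w \<or> [w = y] (mod r)" if "prime r" "r dvd c" for r
  proof (cases "r = q")
    case True
    then show ?thesis
      using that(2) cong_trans[OF w(2) assms(6)] by blast
  qed (use divides[OF that(1) dvd_mult[OF that(2)]] in blast)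
  ultimately show thesis
    using that w assms(2,3) by (simp add: in_kirch_closure_arith_prog)
qed

lemma kirch_closures_inter_cases:
  assumes "openin kirch_topology U" "openin kirch_topology V" "x \<in> U" "y \<in> V" "prime q"
  obtains (all) "\<And>t. \<not> q dvd t \<Longrightarrow>
      \<exists>w \<in> kirch_topology closure_of U \<inter> kirch_topology closure_of V. [w = t] (mod q)"
    | (left) "\<not> q dvd x" "\<exists>w \<in> kirch_topology closure_of U \<inter> kirch_topology closure_of V. [w = x] (mod q)"
    | (right) "\<not> q dvd y" "\<exists>w \<in> kirch_topology closure_of U \<inter> kirch_topology closure_of V. [w = y] (mod q)"
    | (separated) "\<not> q dvd x" "\<not> q dvd y" "\<not> [x = y] (mod q)"
proof -
  obtain b where b: "0 < b" "squarefree b" "coprime x b" "arith_prog x b \<subseteq> U"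
    by (rule kirch_neighbourhood[OF assms(1,3)])
  obtain c where c: "0 < c" "squarefree c" "coprime y c" "arith_prog y c \<subseteq> V"
    by (rule kirch_neighbourhood[OF assms(2,4)])
  have realised: "\<exists>w \<in> kirch_topology closure_of U \<inter> kirch_topology closure_of V. [w = t] (mod q)"
    if t: "\<not> q dvd t" "q dvd b \<Longrightarrow> [t = x] (mod q)" "q dvd c \<Longrightarrow> [t = y] (mod q)" for t
  proof -
    obtain w where "[w = t] (mod q)"
      "w \<in> kirch_topology closure_of arith_prog x b" "w \<in> kirch_topology closure_of arith_prog y c"
      using common_kirch_closure_point[OF assms(5) b(2) c(2) t] by blast
    then show ?thesis
      using closure_of_mono[OF b(4)] closure_of_mono[OF c(4)] by blast
  qed
  have x: "\<not> q dvd x" if "q dvd b"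
    using coprime_prime_not_dvd[OF b(3) assms(5) that] .
  have y: "\<not> q dvd y" if "q dvd c"
    using coprime_prime_not_dvd[OF c(3) assms(5) that] .
  consider "\<not> q dvd b" "\<not> q dvd c" | "q dvd b" "q dvd c \<Longrightarrow> [x = y] (mod q)"
    | "\<not> q dvd b" "q dvd c" | "q dvd b" "q dvd c" "\<not> [x = y] (mod q)"
    by blast
  then show thesis
  proof cases
    case 1
    show thesis
      by (rule all, rule realised) (use 1 in auto)
  next
    case 2
    then show thesis
      using left[OF x[OF 2(1)] realised[OF x[OF 2(1)]]] by simp
  next
    case 3
    then show thesis
      using right[OF y[OF 3(2)] realised[OF y[OF 3(2)]]] by simp
  next
    case 4
    show thesis
      using separated[OF x[OF 4(1)] y[OF 4(2)] 4(3)] .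
  qed
qed

lemma not_cong_if_kirch_closures_inter_multiples:
  assumes "openin kirch_topology U" "openin kirch_topology V" "x \<in> U" "y \<in> V" "prime p"
    "kirch_topology closure_of U \<inter> kirch_topology closure_of V \<subseteq> residue_class p 0"
  shows "\<not> [x = y] (mod p)"
  using assms(1-5)
proof (cases rule: kirch_closures_inter_cases)
  case all
  have "\<not> p dvd 1"
    using prime_ge_2_nat[OF assms(5)] by auto
  then obtain w where "w \<in> residue_class p 0" "[w = 1] (mod p)"
    using assms(6) all by blast
  then have "p dvd 1"
    using cong_dvd_iff in_residue_class_0_iff by blast
  then show ?thesis
    using assms(5) by simp
qed (use assms(6) in \<open>auto simp: in_residue_class_0_iff cong_dvd_iff\<close>)

lemma kirch_closures_residue_classes_inter:
  assumes "prime p" "\<not> [x = y] (mod p)"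
  shows "kirch_topology closure_of residue_class p x \<inter> kirch_topology closure_of residue_class p y
    \<subseteq> residue_class p 0"
proof -
  have "residue_class p x \<inter> residue_class p y = {}"
    using assms(2) cong_trans[OF cong_sym] by (auto simp: residue_class_def)
  then show ?thesis
    using kirch_closure_subset_residue_class[OF assms(1), of "residue_class p x" x]
      kirch_closure_subset_residue_class[OF assms(1), of "residue_class p y" y] by auto
qed

section \<open>A ternary relation preserved by homeomorphisms\<close>

definition closure_linked :: "'a topology \<Rightarrow> 'a \<Rightarrow> 'a \<Rightarrow> 'a \<Rightarrow> bool" where
  "closure_linked X x y z \<longleftrightarrow> (\<forall>W. openin X W \<and> z \<in> W \<longrightarrow>
     (\<exists>U V. openin X U \<and> openin X V \<and> x \<in> U \<and> y \<in> V \<and>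
        X closure_of U \<inter> X closure_of V \<subseteq> X closure_of W))"

lemma closure_linkedE:
  assumes "closure_linked X x y z" "openin X W" "z \<in> W"
  obtains U V where "openin X U" "openin X V" "x \<in> U" "y \<in> V"
    "X closure_of U \<inter> X closure_of V \<subseteq> X closure_of W"
  using assms unfolding closure_linked_def by meson

lemma homeomorphic_map_closures_inter:
  assumes "homeomorphic_map X Y f" "U \<subseteq> topspace X" "V \<subseteq> topspace X"
  shows "Y closure_of (f ` U) \<inter> Y closure_of (f ` V) = f ` (X closure_of U \<inter> X closure_of V)"
  using homeomorphic_map_closure_of[OF assms(1)] assms(2,3)
    inj_on_image_Int[OF homeomorphic_imp_injective_map[OF assms(1)] closure_of_subset_topspace closure_of_subset_topspace]
  by simp

lemma closure_linked_homeomorphic_image: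
  assumes f: "homeomorphic_map X Y f" and "z \<in> topspace X" "closure_linked X x y z"
  shows "closure_linked Y (f x) (f y) (f z)"
  unfolding closure_linked_def
proof (intro allI impI)
  fix W'
  assume W': "openin Y W' \<and> f z \<in> W'"
  define W where "W = {w \<in> topspace X. f w \<in> W'}"
  have W: "openin X W" "z \<in> W" "f ` W \<subseteq> W'"
    using openin_continuous_map_preimage[OF homeomorphic_imp_continuous_map[OF f]] W' assms(2)
    by (auto simp: W_def)
  obtain U V where UV: "openin X U" "openin X V" "x \<in> U" "y \<in> V"
    "X closure_of U \<inter> X closure_of V \<subseteq> X closure_of W"
    using closure_linkedE[OF assms(3) W(1,2)] by blast
  have "Y closure_of (f ` U) \<inter> Y closure_of (f ` V) = f ` (X closure_of U \<inter> X closure_of V)"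
    using homeomorphic_map_closures_inter[OF f] UV(1,2) by (simp add: openin_subset)
  also have "\<dots> \<subseteq> f ` (X closure_of W)"
    using UV(5) by (rule image_mono)
  also have "\<dots> = Y closure_of (f ` W)"
    using homeomorphic_map_closure_of[OF f openin_subset[OF W(1)]] by simp
  also have "\<dots> \<subseteq> Y closure_of W'"
    using W(3) by (rule closure_of_mono)
  finally have "Y closure_of (f ` U) \<inter> Y closure_of (f ` V) \<subseteq> Y closure_of W'" .
  moreover have "openin Y (f ` U)" "openin Y (f ` V)"
    using homeomorphic_map_openness_eq[OF f] UV(1,2) by blast+
  ultimately show "\<exists>U V. openin Y U \<and> openin Y V \<and> f x \<in> U \<and> f y \<in> V \<and>
      Y closure_of U \<inter> Y closure_of V \<subseteq> Y closure_of W'"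
    using UV(3,4) by (intro exI[of _ "f ` U"] exI[of _ "f ` V"]) simp
qed

lemma homeomorphic_image_closure_linked:
  assumes f: "homeomorphic_map X Y f" and "x \<in> topspace X" "y \<in> topspace X"
  shows "f ` {z \<in> topspace X. closure_linked X x y z} = {z \<in> topspace Y. closure_linked Y (f x) (f y) z}"
proof -
  obtain g where "homeomorphic_maps X Y f g"
    using f homeomorphic_map_maps by blast
  then have g: "homeomorphic_map Y X g" "\<And>x. x \<in> topspace X \<Longrightarrow> g (f x) = x"
    "\<And>y. y \<in> topspace Y \<Longrightarrow> f (g y) = y"
    by (auto simp: homeomorphic_maps_map)
  have "z \<in> f ` {z \<in> topspace X. closure_linked X x y z}"
    if "z \<in> topspace Y" "closure_linked Y (f x) (f y) z" for z
  proof (rule image_eqI)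
    show "z = f (g z)"
      using g(3) that(1) by simp
    show "g z \<in> {z \<in> topspace X. closure_linked X x y z}"
      using closure_linked_homeomorphic_image[OF g(1) that] g(2) assms(2,3)
        homeomorphic_imp_surjective_map[OF g(1)] that(1) by auto
  qed
  then show ?thesis
    using closure_linked_homeomorphic_image[OF f] homeomorphic_imp_surjective_map[OF f] by blast
qed

section \<open>The ternary relation in the Kirch space\<close>

definition linked_residues :: "nat \<Rightarrow> nat \<Rightarrow> nat set" where
  "linked_residues x y = {z. 1 \<le> z \<and> (\<forall>q. prime q \<and> odd q \<and> (q dvd x \<or> q dvd y \<or> [x = y] (mod q)) \<longrightarrow>
      q dvd z \<or> [z = x] (mod q) \<or> [z = y] (mod q))}"

lemma linked_residues_separated:
  assumes "z \<in> linked_residues x y" "prime q" "odd q" "\<not> q dvd z" "\<not> [z = x] (mod q)" "\<not> [z = y] (mod q)"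
  shows "\<not> q dvd x" "\<not> q dvd y" "\<not> [x = y] (mod q)"
  using assms by (auto simp: linked_residues_def)

lemma linked_residues_not_dvd:
  assumes "z \<in> linked_residues x y" "prime q" "odd q" "\<not> q dvd z"
  shows "[z = x] (mod q) \<or> \<not> [z = y] (mod q) \<Longrightarrow> \<not> q dvd x"
    and "\<not> [z = x] (mod q) \<Longrightarrow> \<not> q dvd y"
  using assms(4) cong_dvd_iff[of z x q] cong_dvd_iff[of z y q] linked_residues_separated[OF assms]
  by blast+

lemma closure_linked_kirch_separated:
  assumes "closure_linked kirch_topology x y z" "1 \<le> z" "prime q" "odd q"
    and z: "\<not> q dvd z" "\<not> [x = z] (mod q)" "\<not> [y = z] (mod q)"
  shows "\<not> q dvd x" "\<not> q dvd y" "\<not> [x = y] (mod q)"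
proof -
  have "openin kirch_topology (residue_class q z)"
    using assms(3) z(1) by (rule openin_kirch_residue_class)
  moreover have "z \<in> residue_class q z"
    using assms(2) by (simp add: residue_class_def)
  ultimately obtain U V where UV: "openin kirch_topology U" "openin kirch_topology V" "x \<in> U" "y \<in> V"
    and sub: "kirch_topology closure_of U \<inter> kirch_topology closure_of V
      \<subseteq> kirch_topology closure_of residue_class q z"
    using closure_linkedE[OF assms(1)] by blast
  have avoided: "\<not> [w = t] (mod q)"
    if "w \<in> kirch_topology closure_of U \<inter> kirch_topology closure_of V" "\<not> q dvd t" "\<not> [t = z] (mod q)"
    for w t
  proof
    assume wt: "[w = t] (mod q)"
    have "w \<in> residue_class q z \<union> residue_class q 0"
      using kirch_closure_subset_residue_class[OF assms(3) order_refl] sub that(1) by blast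
    then show False
      using that(2,3) cong_trans[OF cong_sym[OF wt]] cong_dvd_iff[OF wt]
      by (auto simp: residue_class_def cong_0_iff)
  qed
  from UV assms(3) have "\<not> q dvd x \<and> \<not> q dvd y \<and> \<not> [x = y] (mod q)"
  proof (cases rule: kirch_closures_inter_cases)
    case all
    obtain t where "\<not> q dvd t" "\<not> [t = z] (mod q)"
      using odd_prime_avoiding_residue assms(3,4) by blast
    then show ?thesis
      using all avoided by blast
  qed (use avoided z in blast)+
  then show "\<not> q dvd x" "\<not> q dvd y" "\<not> [x = y] (mod q)"
    by blast+
qed

lemma closure_linked_kirch_imp_linked_residues:
  assumes "1 \<le> z" "closure_linked kirch_topology x y z"
  shows "z \<in> linked_residues x y"
  using closure_linked_kirch_separated[OF assms(2,1)] assms(1) by (auto simp: linked_residues_def cong_sym_eq)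

lemma linked_residues_prime_cases:
  assumes "z \<in> linked_residues x y" "prime r" "odd r" "\<not> r dvd z"
    "[z = x] (mod r) \<or> \<not> [z = y] (mod r) \<Longrightarrow> r dvd w \<or> [w = x] (mod r)"
    "\<not> [z = x] (mod r) \<Longrightarrow> r dvd w \<or> [w = y] (mod r)"
  shows "r dvd w \<or> [w = z] (mod r)"
proof -
  consider (x) "[z = x] (mod r)" | (y) "\<not> [z = x] (mod r)" "[z = y] (mod r)"
    | (neither) "\<not> [z = x] (mod r)" "\<not> [z = y] (mod r)"
    by blast
  then show ?thesis
  proof cases
    case x
    then show ?thesis
      using assms(5) cong_trans[OF _ cong_sym[OF x]] by blast
  next
    case y
    then show ?thesis
      using assms(6) cong_trans[OF _ cong_sym[OF y(2)]] by blast
  next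
    case neither
    then show ?thesis
      using assms(5,6) linked_residues_separated(3)[OF assms(1-4) neither] cong_trans[OF cong_sym]
      by blast
  qed
qed

lemma kirch_closure_residue_system:
  assumes "w \<in> kirch_topology closure_of residue_system Q (\<lambda>_. a)" "q \<in> Q" "prime q"
  shows "q dvd w \<or> [w = a] (mod q)"
proof -
  have "residue_system Q (\<lambda>_. a) \<subseteq> residue_class q a"
    using assms(2) by (auto simp: residue_system_def residue_class_def)
  then have "w \<in> residue_class q a \<union> residue_class q 0"
    using kirch_closure_subset_residue_class[OF assms(3)] assms(1) by blast
  then show ?thesis
    by (auto simp: residue_class_def cong_0_iff)
qed

lemma kirch_closures_residue_systems_subset:
  assumes "z \<in> linked_residues x y" "squarefree d" "coprime z d"
    and B: "\<And>q. prime q \<Longrightarrow> odd q \<Longrightarrow> q dvd d \<Longrightarrow> [z = x] (mod q) \<or> \<not> [z = y] (mod q) \<Longrightarrow> q \<in> B"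
    and C: "\<And>q. prime q \<Longrightarrow> odd q \<Longrightarrow> q dvd d \<Longrightarrow> \<not> [z = x] (mod q) \<Longrightarrow> q \<in> C"
  shows "kirch_topology closure_of residue_system B (\<lambda>_. x) \<inter> kirch_topology closure_of residue_system C (\<lambda>_. y)
    \<subseteq> kirch_topology closure_of arith_prog z d"
proof
  fix w
  assume w: "w \<in> kirch_topology closure_of residue_system B (\<lambda>_. x)
    \<inter> kirch_topology closure_of residue_system C (\<lambda>_. y)"
  have "r dvd w \<or> [w = z] (mod r)" if r: "prime r" "r dvd d" for r
  proof -
    have "\<not> r dvd z"
      using coprime_prime_not_dvd[OF assms(3) r] .
    show ?thesis
    proof (cases "odd r")
      case True
      show ?thesis
        using linked_residues_prime_cases[OF assms(1) r(1) True \<open>\<not> r dvd z\<close>]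
          kirch_closure_residue_system[of w B x r] kirch_closure_residue_system[of w C y r]
          B[OF r(1) True r(2)] C[OF r(1) True r(2)] w r(1) by blast
    next
      case False
      then have "r = 2"
        using prime_odd_nat[OF r(1)] prime_ge_2_nat[OF r(1)] by fastforce
      then show ?thesis
        using \<open>\<not> r dvd z\<close> by (auto simp: cong_def odd_iff_mod_2_eq_one)
    qed
  qed
  moreover have "1 \<le> w"
    using w closure_of_subset_topspace by (fastforce simp: topspace_kirch)
  ultimately show "w \<in> kirch_topology closure_of arith_prog z d"
    using assms(2) by (simp add: in_kirch_closure_arith_prog)
qed

lemma linked_residues_imp_closure_linked_kirch:
  assumes "1 \<le> x" "1 \<le> y" "z \<in> linked_residues x y"
  shows "closure_linked kirch_topology x y z"
  unfolding closure_linked_def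
proof (intro allI impI)
  fix W
  assume "openin kirch_topology W \<and> z \<in> W"
  then obtain d where d: "0 < d" "squarefree d" "coprime z d" "arith_prog z d \<subseteq> W"
    using kirch_neighbourhood by blast
  have z: "\<not> q dvd z" if "prime q" "q dvd d" for q
    using coprime_prime_not_dvd[OF d(3) that] .
  \<comment> \<open>at an odd prime of \<open>d\<close> where \<open>z\<close> is congruent to neither \<open>x\<close> nor \<open>y\<close>, both residues are
      imposed; as \<open>x \<not>\<equiv> y\<close> there, common closure points of \<open>U\<close> and \<open>V\<close> are multiples of it\<close>
  define B where "B = {q. prime q \<and> odd q \<and> q dvd d \<and> ([z = x] (mod q) \<or> \<not> [z = y] (mod q))}"
  define C where "C = {q. prime q \<and> odd q \<and> q dvd d \<and> \<not> [z = x] (mod q)}"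
  define U where "U = residue_system B (\<lambda>_. x)"
  define V where "V = residue_system C (\<lambda>_. y)"
  have "finite B" "finite C"
    using finite_divisors_nat[OF d(1)] by (auto simp: B_def C_def elim: finite_subset[rotated])
  then have "openin kirch_topology U" "openin kirch_topology V"
    using linked_residues_not_dvd[OF assms(3)] z
    by (auto simp: U_def V_def B_def C_def intro!: openin_kirch_residue_system)
  moreover have "x \<in> U" "y \<in> V"
    using assms(1,2) by (simp_all add: U_def V_def residue_system_def)
  moreover have "kirch_topology closure_of U \<inter> kirch_topology closure_of V \<subseteq> kirch_topology closure_of W"
    using kirch_closures_residue_systems_subset[OF assms(3) d(2,3), of B C] closure_of_mono[OF d(4)]
    by (auto simp: U_def V_def B_def C_def)
  ultimately show "\<exists>U V. openin kirch_topology U \<and> openin kirch_topology V \<and> x \<in> U \<and> y \<in> V \<and>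
      kirch_topology closure_of U \<inter> kirch_topology closure_of V \<subseteq> kirch_topology closure_of W"
    by blast
qed

lemma kirch_closure_linked_eq:
  assumes "1 \<le> x" "1 \<le> y"
  shows "{z \<in> topspace kirch_topology. closure_linked kirch_topology x y z} = linked_residues x y"
proof (intro equalityI subsetI)
  fix z
  assume "z \<in> {z \<in> topspace kirch_topology. closure_linked kirch_topology x y z}"
  then show "z \<in> linked_residues x y"
    using closure_linked_kirch_imp_linked_residues by (simp add: topspace_kirch)
next
  fix z
  assume "z \<in> linked_residues x y"
  moreover have "linked_residues x y \<subseteq> topspace kirch_topology"
    by (auto simp: linked_residues_def topspace_kirch)
  ultimately show "z \<in> {z \<in> topspace kirch_topology. closure_linked kirch_topology x y z}"
    using linked_residues_imp_closure_linked_kirch[OF assms] by blast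
qed

lemma linked_residues_double:
  assumes "prime p" "odd p"
  shows "linked_residues p (2 * p) = residue_class p 0"
proof (intro equalityI subsetI)
  fix z
  assume "z \<in> linked_residues p (2 * p)"
  then have "1 \<le> z" "p dvd z \<or> [z = p] (mod p) \<or> [z = 2 * p] (mod p)"
    using assms by (auto simp: linked_residues_def)
  then show "z \<in> residue_class p 0"
    by (auto simp: in_residue_class_0_iff cong_dvd_iff[of z p p] cong_dvd_iff[of z "2 * p" p])
next
  fix z
  assume z: "z \<in> residue_class p 0"
  have "q = p" if "prime q" "odd q" "q dvd p \<or> q dvd 2 * p \<or> [p = 2 * p] (mod q)" for q
  proof -
    have "[p = 2 * p] (mod q) \<Longrightarrow> q dvd p"
      using cong_altdef_nat[of p "2 * p" q] by (simp add: cong_sym_eq)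
    moreover have "\<not> q dvd 2"
      using primes_dvd_imp_eq[OF that(1) two_is_prime_nat] that(2) by auto
    then have "q dvd 2 * p \<Longrightarrow> q dvd p"
      using prime_dvd_mult_iff[OF that(1)] by blast
    ultimately have "q dvd p"
      using that(3) by blast
    then show ?thesis
      using primes_dvd_imp_eq[OF that(1) assms(1)] by blast
  qed
  then show "z \<in> linked_residues p (2 * p)"
    using z by (auto simp: linked_residues_def in_residue_class_0_iff)
qed

lemma kirch_multiples_closure_linked:
  assumes "prime p" "odd p"
  shows "residue_class p 0 = {z \<in> topspace kirch_topology. closure_linked kirch_topology p (2 * p) z}"
proof -
  have "1 \<le> p"
    using prime_gt_0_nat[OF assms(1)] by simp
  then show ?thesis
    using kirch_closure_linked_eq[of p "2 * p"] linked_residues_double[OF assms] by simp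
qed

lemma linked_residues_empty_interior:
  assumes "1 \<le> x" "1 \<le> y" "x \<noteq> y" "kirch_topology interior_of linked_residues x y = {}"
  obtains q where "prime q" "odd q" "linked_residues x y \<subseteq> residue_class q 0"
proof (cases "\<exists>q. prime q \<and> odd q \<and> q dvd x \<and> q dvd y")
  case True
  then obtain q where q: "prime q" "odd q" "q dvd x" "q dvd y"
    by blast
  have "z \<in> residue_class q 0" if "z \<in> linked_residues x y" for z
  proof -
    have "1 \<le> z" "q dvd z \<or> [z = x] (mod q) \<or> [z = y] (mod q)"
      using that q by (auto simp: linked_residues_def)
    then show ?thesis
      using q(3,4) cong_dvd_iff[of z x q] cong_dvd_iff[of z y q] by (auto simp: in_residue_class_0_iff)
  qed
  then show thesis
    using that q by blast
next
  case False
  define S where "S = {q. prime q \<and> odd q \<and> (q dvd x \<or> q dvd y \<or> [x = y] (mod q))}"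
  define r where "r q = (if q dvd x then y else x)" for q
  have "S \<subseteq> {q. q dvd x * y * nat \<bar>int x - int y\<bar>}"
    by (auto simp: S_def cong_altdef_nat' intro: dvd_mult dvd_mult2)
  moreover have "x * y * nat \<bar>int x - int y\<bar> > 0"
    using assms(1-3) by auto
  ultimately have "finite S"
    using finite_divisors_nat finite_subset by blast
  moreover have S: "prime q \<and> \<not> q dvd r q" if "q \<in> S" for q
    using that False by (auto simp: S_def r_def)
  ultimately have "openin kirch_topology (residue_system S r)" "residue_system S r \<noteq> {}"
    by (simp_all add: openin_kirch_residue_system residue_system_nonempty)
  moreover have "residue_system S r \<subseteq> linked_residues x y"
    by (auto simp: residue_system_def linked_residues_def S_def r_def split: if_splits)
  ultimately have "kirch_topology interior_of linked_residues x y \<noteq> {}"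
    using interior_of_maximal by blast
  then show thesis
    using assms(4) by blast
qed

lemma multiples_empty_interior:
  assumes "prime p"
  shows "kirch_topology interior_of residue_class p 0 = {}"
proof (rule ccontr)
  assume "kirch_topology interior_of residue_class p 0 \<noteq> {}"
  then obtain w where w: "w \<in> kirch_topology interior_of residue_class p 0"
    by blast
  obtain b where b: "0 < b" "coprime w b" "arith_prog w b \<subseteq> kirch_topology interior_of residue_class p 0"
    using kirch_neighbourhood[OF openin_interior_of w] by blast
  have "w \<in> arith_prog w b" "w + b \<in> arith_prog w b"
    by (simp_all add: arith_prog_iff_cong cong_def)
  moreover have "arith_prog w b \<subseteq> residue_class p 0"
    using b(3) interior_of_subset by (rule order_trans)
  ultimately have "p dvd w" "p dvd w + b"
    by (auto simp: in_residue_class_0_iff)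
  then have "p dvd b"
    by (simp add: dvd_add_right_iff)
  then show False
    using \<open>p dvd w\<close> coprime_prime_not_dvd[OF b(2) assms] by blast
qed

section \<open>Homeomorphisms of the Kirch space\<close>

lemma image_image_cancel:
  assumes "\<And>x. x \<in> S \<Longrightarrow> g (f x) = x"
  shows "g ` f ` S = S"
proof -
  have "(\<lambda>x. g (f x)) ` S = (\<lambda>x. x) ` S"
    using assms by (rule image_cong[OF refl])
  then show ?thesis
    by (simp add: image_image)
qed

lemma kirch_homeomorphic_ge_one:
  assumes "homeomorphic_map kirch_topology kirch_topology f" "1 \<le> x"
  shows "1 \<le> f x"
proof -
  have "f ` {1..} = {1..}"
    using homeomorphic_imp_surjective_map[OF assms(1)] by (simp add: topspace_kirch)
  then show ?thesis
    using assms(2) by (metis atLeast_iff image_eqI)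
qed

lemma kirch_homeomorphic_inverse:
  assumes "homeomorphic_map kirch_topology kirch_topology f"
  obtains g where "homeomorphic_map kirch_topology kirch_topology g"
    "\<And>x. 1 \<le> x \<Longrightarrow> g (f x) = x" "\<And>y. 1 \<le> y \<Longrightarrow> f (g y) = y"
proof -
  obtain g where "homeomorphic_maps kirch_topology kirch_topology f g"
    using assms homeomorphic_map_maps by blast
  then have "homeomorphic_map kirch_topology kirch_topology g"
    "\<And>x. 1 \<le> x \<Longrightarrow> g (f x) = x" "\<And>y. 1 \<le> y \<Longrightarrow> f (g y) = y"
    by (auto simp: homeomorphic_maps_map topspace_kirch)
  then show thesis
    by (rule that)
qed

lemma kirch_homeomorphic_image_multiples_subset:
  assumes f: "homeomorphic_map kirch_topology kirch_topology f" and "prime p" "odd p"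
  obtains q where "prime q" "odd q" "f ` residue_class p 0 \<subseteq> residue_class q 0"
proof -
  have p: "p \<in> topspace kirch_topology" "2 * p \<in> topspace kirch_topology"
    using prime_gt_0_nat[OF assms(2)] by (auto simp: topspace_kirch)
  then have fp: "1 \<le> f p" "1 \<le> f (2 * p)"
    using kirch_homeomorphic_ge_one[OF f] by (simp_all add: topspace_kirch)
  have "f ` residue_class p 0
      = {z \<in> topspace kirch_topology. closure_linked kirch_topology (f p) (f (2 * p)) z}"
    using homeomorphic_image_closure_linked[OF f p] kirch_multiples_closure_linked[OF assms(2,3)] by simp
  also have "\<dots> = linked_residues (f p) (f (2 * p))"
    using kirch_closure_linked_eq[OF fp] .
  finally have image: "f ` residue_class p 0 = linked_residues (f p) (f (2 * p))" .
  have "residue_class p 0 \<subseteq> topspace kirch_topology"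
    by (auto simp: topspace_kirch residue_class_def)
  then have "kirch_topology interior_of (f ` residue_class p 0)
      = f ` (kirch_topology interior_of residue_class p 0)"
    by (rule homeomorphic_map_interior_of[OF f])
  then have "kirch_topology interior_of linked_residues (f p) (f (2 * p)) = {}"
    using multiples_empty_interior[OF assms(2)] image by simp
  moreover have "f p \<noteq> f (2 * p)"
  proof
    assume "f p = f (2 * p)"
    then have "p = 2 * p"
      using inj_onD[OF homeomorphic_imp_injective_map[OF f] _ p] by blast
    then show False
      using p(1) by (simp add: topspace_kirch)
  qed
  ultimately obtain q where "prime q" "odd q" "linked_residues (f p) (f (2 * p)) \<subseteq> residue_class q 0"
    using linked_residues_empty_interior[OF fp] by blast
  then show thesis
    using that image by blast
qed

lemma kirch_homeomorphic_image_multiples: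
  assumes f: "homeomorphic_map kirch_topology kirch_topology f" and p: "prime p" "odd p"
  obtains q where "prime q" "odd q" "f ` residue_class p 0 = residue_class q 0"
proof -
  obtain g where g: "homeomorphic_map kirch_topology kirch_topology g"
    "\<And>x. 1 \<le> x \<Longrightarrow> g (f x) = x" "\<And>y. 1 \<le> y \<Longrightarrow> f (g y) = y"
    using kirch_homeomorphic_inverse[OF f] by blast
  obtain q where q: "prime q" "odd q" "f ` residue_class p 0 \<subseteq> residue_class q 0"
    using kirch_homeomorphic_image_multiples_subset[OF f p] .
  obtain r where r: "prime r" "odd r" "g ` residue_class q 0 \<subseteq> residue_class r 0"
    using kirch_homeomorphic_image_multiples_subset[OF g(1) q(1,2)] .
  have "g ` f ` residue_class p 0 = residue_class p 0"
    by (rule image_image_cancel) (simp add: g(2) residue_class_def)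
  then have "residue_class p 0 = g ` f ` residue_class p 0"
    by simp
  also have "\<dots> \<subseteq> residue_class r 0"
    using q(3) r(3) by blast
  finally have "residue_class p 0 \<subseteq> residue_class r 0" .
  moreover have "p \<in> residue_class p 0"
    using prime_gt_0_nat[OF p(1)] by (simp add: in_residue_class_0_iff)
  ultimately have "p \<in> residue_class r 0"
    by blast
  then have "r dvd p"
    by (simp add: in_residue_class_0_iff)
  then have "r = p"
    using primes_dvd_imp_eq[OF r(1) p(1)] by blast
  have "f ` g ` residue_class q 0 = residue_class q 0"
    by (rule image_image_cancel) (simp add: g(3) residue_class_def)
  then have "residue_class q 0 = f ` g ` residue_class q 0"
    by simp
  also have "\<dots> \<subseteq> f ` residue_class p 0"
    using r(3) \<open>r = p\<close> by blast
  finally show thesis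
    using that q by blast
qed

lemma kirch_homeomorphic_preimage_multiples:
  assumes f: "homeomorphic_map kirch_topology kirch_topology f" and "prime q" "odd q"
  obtains p where "prime p" "odd p" "f ` residue_class p 0 = residue_class q 0"
proof -
  obtain g where g: "homeomorphic_map kirch_topology kirch_topology g"
    "\<And>x. 1 \<le> x \<Longrightarrow> g (f x) = x" "\<And>y. 1 \<le> y \<Longrightarrow> f (g y) = y"
    using kirch_homeomorphic_inverse[OF f] by blast
  obtain p where p: "prime p" "odd p" "g ` residue_class q 0 = residue_class p 0"
    using kirch_homeomorphic_image_multiples[OF g(1) assms(2,3)] .
  have "f ` residue_class p 0 = f ` g ` residue_class q 0"
    using p(3) by simp
  also have "\<dots> = residue_class q 0"
    by (rule image_image_cancel) (simp add: g(3) residue_class_def)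
  finally show thesis
    using that p(1,2) by blast
qed

lemma kirch_homeomorphic_dvd_iff:
  assumes f: "homeomorphic_map kirch_topology kirch_topology f"
    and pq: "f ` residue_class p 0 = residue_class q 0" and "1 \<le> x"
  shows "q dvd f x \<longleftrightarrow> p dvd x"
proof -
  have inj: "inj_on f {1..}"
    using homeomorphic_imp_injective_map[OF f] by (simp add: topspace_kirch)
  have "q dvd f x \<longleftrightarrow> f x \<in> f ` residue_class p 0"
    using pq kirch_homeomorphic_ge_one[OF f assms(3)] by (simp add: in_residue_class_0_iff)
  also have "\<dots> \<longleftrightarrow> x \<in> residue_class p 0"
    using inj_on_image_mem_iff[OF inj, of x "residue_class p 0"] assms(3) by (auto simp: residue_class_def)
  finally show ?thesis
    using assms(3) by (simp add: in_residue_class_0_iff)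
qed

lemma kirch_homeomorphic_not_cong:
  assumes f: "homeomorphic_map kirch_topology kirch_topology f" and "prime p" "prime q"
    and pq: "f ` residue_class p 0 = residue_class q 0"
    and "1 \<le> x" "1 \<le> y" "\<not> [x = y] (mod p)"
  shows "\<not> [f x = f y] (mod q)"
proof (cases "p dvd x \<or> p dvd y")
  case True
  have "\<not> (p dvd x \<and> p dvd y)"
  proof
    assume "p dvd x \<and> p dvd y"
    then have "[x = 0] (mod p)" "[y = 0] (mod p)"
      by (simp_all add: cong_0_iff)
    then show False
      using assms(7) cong_trans[OF _ cong_sym] by blast
  qed
  then have "(q dvd f x) \<noteq> (q dvd f y)"
    using True kirch_homeomorphic_dvd_iff[OF f pq] assms(5,6) by auto
  then show ?thesis
    using cong_dvd_iff by blast
next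
  case False
  define U where "U = residue_class p x"
  define V where "V = residue_class p y"
  have open_UV: "openin kirch_topology U" "openin kirch_topology V"
    using False assms(2) by (simp_all add: U_def V_def openin_kirch_residue_class)
  have "kirch_topology closure_of U \<inter> kirch_topology closure_of V \<subseteq> residue_class p 0"
    unfolding U_def V_def using assms(2,7) by (rule kirch_closures_residue_classes_inter)
  then have "f ` (kirch_topology closure_of U \<inter> kirch_topology closure_of V) \<subseteq> residue_class q 0"
    using pq by blast
  then have closures: "kirch_topology closure_of (f ` U) \<inter> kirch_topology closure_of (f ` V)
      \<subseteq> residue_class q 0"
    using homeomorphic_map_closures_inter[OF f] open_UV by (simp add: openin_subset)
  have "openin kirch_topology (f ` U)" "openin kirch_topology (f ` V)"
    using homeomorphic_map_openness_eq[OF f] open_UV by blast+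
  moreover have "f x \<in> f ` U" "f y \<in> f ` V"
    using assms(5,6) by (simp_all add: U_def V_def residue_class_def)
  ultimately show ?thesis
    using not_cong_if_kirch_closures_inter_multiples[OF _ _ _ _ assms(3) closures] by blast
qed

lemma kirch_homeomorphic_cong_iff:
  assumes f: "homeomorphic_map kirch_topology kirch_topology f" and "prime p" "prime q"
    and pq: "f ` residue_class p 0 = residue_class q 0" and "1 \<le> x" "1 \<le> y"
  shows "[f x = f y] (mod q) \<longleftrightarrow> [x = y] (mod p)"
proof
  assume xy: "[x = y] (mod p)"
  obtain g where g: "homeomorphic_map kirch_topology kirch_topology g"
    "\<And>x. 1 \<le> x \<Longrightarrow> g (f x) = x" "\<And>y. 1 \<le> y \<Longrightarrow> f (g y) = y"
    using kirch_homeomorphic_inverse[OF f] by blast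
  have "g ` residue_class q 0 = g ` f ` residue_class p 0"
    using pq by simp
  also have "\<dots> = residue_class p 0"
    by (rule image_image_cancel) (simp add: g(2) residue_class_def)
  finally have qp: "g ` residue_class q 0 = residue_class p 0" .
  show "[f x = f y] (mod q)"
  proof (rule ccontr)
    assume "\<not> [f x = f y] (mod q)"
    then have "\<not> [g (f x) = g (f y)] (mod p)"
      using kirch_homeomorphic_not_cong[OF g(1) assms(3,2) qp]
        kirch_homeomorphic_ge_one[OF f assms(5)] kirch_homeomorphic_ge_one[OF f assms(6)] by blast
    then show False
      using xy g(2) assms(5,6) by simp
  qed
qed (use kirch_homeomorphic_not_cong[OF assms] in blast)

section \<open>Bijections preserving powers of two and their differences\<close>

lemma power_of_two_if_no_odd_prime_factor:
  fixes n :: nat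
  assumes "n \<noteq> 0" "\<not> (\<exists>p. prime p \<and> odd p \<and> p dvd n)"
  shows "\<exists>k. n = 2 ^ k"
  using assms
proof (induction n rule: less_induct)
  case (less n)
  show ?case
  proof (cases "n = 1")
    case True
    then show ?thesis
      by (intro exI[of _ 0]) simp
  next
    case False
    then obtain p where p: "prime p" "p dvd n"
      using prime_factor_nat by blast
    then have "2 dvd p"
      using less.prems(2) by blast
    then have "p = 2"
      using primes_dvd_imp_eq[OF two_is_prime_nat p(1)] by simp
    then obtain m where m: "n = 2 * m"
      using p(2) by blast
    then have "m \<noteq> 0" "m < n"
      using less.prems(1) by auto
    moreover have "\<not> (\<exists>p. prime p \<and> odd p \<and> p dvd m)"
      using less.prems(2) m by (blast intro: dvd_mult)
    ultimately obtain k where "m = 2 ^ k"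
      using less.IH by blast
    then show ?thesis
      using m by (intro exI[of _ "Suc k"]) simp
  qed
qed

lemma power_of_two_iff_no_odd_prime_factor:
  fixes n :: nat
  assumes "n \<noteq> 0"
  shows "(\<exists>k. n = 2 ^ k) \<longleftrightarrow> \<not> (\<exists>p. prime p \<and> odd p \<and> p dvd n)"
proof
  assume "\<exists>k. n = 2 ^ k"
  then obtain k where k: "n = 2 ^ k"
    by blast
  show "\<not> (\<exists>p. prime p \<and> odd p \<and> p dvd n)"
  proof
    assume "\<exists>p. prime p \<and> odd p \<and> p dvd n"
    then obtain p :: nat where p: "prime p" "odd p" "p dvd 2 ^ k"
      using k by blast
    then have "p = 2"
      using prime_dvd_power primes_dvd_imp_eq[OF p(1) two_is_prime_nat] by blast
    then show False
      using p(2) by simp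
  qed
qed (use assms power_of_two_if_no_odd_prime_factor in blast)

definition two_power_apart :: "nat \<Rightarrow> nat \<Rightarrow> bool" where
  "two_power_apart x y \<longleftrightarrow> (\<exists>k. x + 2 ^ k = y \<or> y + 2 ^ k = x)"

lemma two_power_apart_sym: "two_power_apart x y \<longleftrightarrow> two_power_apart y x"
  by (auto simp: two_power_apart_def)

lemma two_power_apart_double: "two_power_apart (2 ^ k) (2 ^ Suc k)"
  unfolding two_power_apart_def by (rule exI[of _ k]) simp

lemma two_power_apart_leE:
  assumes "two_power_apart x y" "x \<le> y"
  obtains k where "x + 2 ^ k = y"
proof -
  obtain k where "x + 2 ^ k = y \<or> y + 2 ^ k = x"
    using assms(1) unfolding two_power_apart_def by blast
  moreover have "(0::nat) < 2 ^ k"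
    by simp
  ultimately have "x + 2 ^ k = y"
    using assms(2) by linarith
  then show thesis
    by (rule that)
qed

lemma two_power_apart_iff_not_cong:
  "two_power_apart x y \<longleftrightarrow> x \<noteq> y \<and> \<not> (\<exists>p. prime p \<and> odd p \<and> [x = y] (mod p))"
proof -
  have *: "two_power_apart x y \<longleftrightarrow> \<not> (\<exists>p. prime p \<and> odd p \<and> [x = y] (mod p))"
    if "x < y" for x y :: nat
  proof -
    have "x + 2 ^ k = y \<longleftrightarrow> y - x = 2 ^ k" for k
      using that by arith
    then have "two_power_apart x y \<longleftrightarrow> (\<exists>k. y - x = 2 ^ k)"
      using that by (auto simp: two_power_apart_def)
    also have "\<dots> \<longleftrightarrow> \<not> (\<exists>p. prime p \<and> odd p \<and> p dvd y - x)"
      using that by (intro power_of_two_iff_no_odd_prime_factor) simp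
    also have "\<dots> \<longleftrightarrow> \<not> (\<exists>p. prime p \<and> odd p \<and> [x = y] (mod p))"
      using that cong_altdef_nat[of x y] by (simp add: cong_sym_eq[of x y])
    finally show ?thesis .
  qed
  show ?thesis
  proof (cases x y rule: linorder_cases)
    case less
    then show ?thesis
      using * by simp
  next
    case equal
    then show ?thesis
      by (simp add: two_power_apart_def)
  next
    case greater
    then show ?thesis
      using *[OF greater] by (simp add: two_power_apart_sym cong_sym_eq)
  qed
qed

lemma power_two_eq_Suc_power_two:
  assumes "(2::nat) ^ t = 2 ^ s + 1"
  shows "s = 0"
proof (rule ccontr)
  assume "s \<noteq> 0"
  then have "odd ((2::nat) ^ t)"
    using assms by simp
  then have "t = 0"
    by simp
  then show False
    using assms by simp
qed

lemma two_power_apart_one_power_two: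
  assumes "two_power_apart 1 (2 ^ k)"
  shows "k = 1"
proof -
  obtain j where "1 + 2 ^ j = (2::nat) ^ k \<or> 2 ^ k + 2 ^ j = (1::nat)"
    using assms by (auto simp: two_power_apart_def)
  moreover have "(2::nat) ^ k + 2 ^ j \<noteq> 1"
    using one_le_power[of "2::nat" k] one_le_power[of "2::nat" j] by linarith
  ultimately have "2 ^ k = 2 ^ j + (1::nat)"
    by simp
  then have "(2::nat) ^ k = 2"
    using power_two_eq_Suc_power_two by simp
  then show ?thesis
    using power_inject_exp[of "2::nat" k 1] by simp
qed

locale two_power_automorphism =
  fixes f :: "nat \<Rightarrow> nat"
  assumes bij: "bij_betw f {1..} {1..}"
    and power_of_two_iff: "1 \<le> x \<Longrightarrow> (\<exists>k. f x = 2 ^ k) \<longleftrightarrow> (\<exists>k. x = 2 ^ k)"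
    and two_power_apart_iff: "1 \<le> x \<Longrightarrow> 1 \<le> y \<Longrightarrow> two_power_apart (f x) (f y) \<longleftrightarrow> two_power_apart x y"
begin

lemma ge_one: "1 \<le> x \<Longrightarrow> 1 \<le> f x"
  using bij by (auto simp: bij_betw_def)

lemma eq_iff: "1 \<le> x \<Longrightarrow> 1 \<le> y \<Longrightarrow> f x = f y \<longleftrightarrow> x = y"
  using bij by (auto simp: bij_betw_def inj_on_eq_iff)

lemma surj: "1 \<le> y \<Longrightarrow> \<exists>x\<ge>1. f x = y"
  using bij by (metis atLeast_iff bij_betw_imp_surj_on imageE)

lemma fixes_one: "f 1 = 1"
proof -
  obtain a where a: "f 1 = 2 ^ a"
    using power_of_two_iff[of 1] by (metis order_refl power_0)
  \<comment> \<open>the powers of two form a path \<open>1 - 2 - 4 - \<dots>\<close> under \<open>two_power_apart\<close>, with end point \<open>1\<close>\<close>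
  have neighbour: "u = 2" if u: "1 \<le> u" "f u = 2 ^ c" "two_power_apart (2 ^ a) (2 ^ c)" for u c
  proof -
    obtain k where k: "u = 2 ^ k"
      using power_of_two_iff[OF u(1)] u(2) by blast
    moreover have "two_power_apart 1 u"
      using two_power_apart_iff[of 1 u] u a by simp
    ultimately have "k = 1"
      using two_power_apart_one_power_two by blast
    then show "u = 2"
      using k by simp
  qed
  show ?thesis
  proof (cases a)
    case 0
    then show ?thesis
      using a by simp
  next
    case (Suc b)
    obtain u where u: "1 \<le> u" "f u = 2 ^ b"
      using surj[of "2 ^ b"] one_le_power[of "2::nat" b] by auto
    obtain v where v: "1 \<le> v" "f v = 2 ^ Suc a"
      using surj[of "2 ^ Suc a"] one_le_power[of "2::nat" "Suc a"] by auto
    have "u = 2"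
      using neighbour[OF u] two_power_apart_double[of b] Suc by (simp add: two_power_apart_sym)
    moreover have "v = 2"
      using neighbour[OF v] two_power_apart_double[of a] by simp
    ultimately have "(2::nat) ^ b = 2 ^ Suc a"
      using u v by simp
    then show ?thesis
      using Suc by simp
  qed
qed

lemma fixes_two: "f 2 = 2"
proof -
  obtain k where k: "f 2 = 2 ^ k"
    using power_of_two_iff[of 2] by (metis one_le_numeral power_one_right)
  have "two_power_apart 1 2"
    unfolding two_power_apart_def by (rule exI[of _ 0]) simp
  then have "two_power_apart 1 (f 2)"
    using two_power_apart_iff[of 1 2] fixes_one by simp
  then have "k = 1"
    using k two_power_apart_one_power_two by simp
  then show ?thesis
    using k by simp
qed

lemma fixes_all: "1 \<le> x \<Longrightarrow> f x = x"
proof (induction x rule: less_induct)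
  case (less x)
  consider "x = 1" | "x = 2" | "3 \<le> x"
    using less.prems by linarith
  then show ?case
  proof cases
    case 3
    have "x \<le> f x"
    proof (rule ccontr)
      assume "\<not> x \<le> f x"
      then have "f (f x) = f x"
        using less.IH ge_one[OF less.prems] by simp
      then have "f x = x"
        using eq_iff ge_one[OF less.prems] less.prems by blast
      then show False
        using \<open>\<not> x \<le> f x\<close> by simp
    qed
    have "two_power_apart (x - 1) x"
      unfolding two_power_apart_def using 3 by (intro exI[of _ 0]) simp
    moreover have "two_power_apart (x - 2) x"
      unfolding two_power_apart_def using 3 by (intro exI[of _ 1] disjI1) simp
    moreover have "f (x - 1) = x - 1" "f (x - 2) = x - 2"
      using less.IH 3 by simp_all
    ultimately have "two_power_apart (x - 1) (f x)" "two_power_apart (x - 2) (f x)"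
      using two_power_apart_iff[of "x - 1" x] two_power_apart_iff[of "x - 2" x] 3 by simp_all
    then obtain s t where s: "x - 1 + 2 ^ s = f x" and t: "x - 2 + 2 ^ t = f x"
      using two_power_apart_leE \<open>x \<le> f x\<close> by (metis diff_le_self le_trans)
    then have "2 ^ t = 2 ^ s + (1::nat)"
      using 3 by linarith
    then have "s = 0"
      by (rule power_two_eq_Suc_power_two)
    then show ?thesis
      using s 3 by simp
  qed (use fixes_one fixes_two in simp_all)
qed

end

lemma kirch_homeomorphic_power_of_two_iff:
  assumes f: "homeomorphic_map kirch_topology kirch_topology f" and "1 \<le> x"
  shows "(\<exists>k. f x = 2 ^ k) \<longleftrightarrow> (\<exists>k. x = 2 ^ k)"
proof -
  have "(\<exists>q. prime q \<and> odd q \<and> q dvd f x) \<longleftrightarrow> (\<exists>p. prime p \<and> odd p \<and> p dvd x)"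
  proof
    assume "\<exists>q. prime q \<and> odd q \<and> q dvd f x"
    then obtain q where q: "prime q" "odd q" "q dvd f x"
      by blast
    obtain p where p: "prime p" "odd p" "f ` residue_class p 0 = residue_class q 0"
      using kirch_homeomorphic_preimage_multiples[OF f q(1,2)] by blast
    then show "\<exists>p. prime p \<and> odd p \<and> p dvd x"
      using q(3) kirch_homeomorphic_dvd_iff[OF f p(3) assms(2)] by blast
  next
    assume "\<exists>p. prime p \<and> odd p \<and> p dvd x"
    then obtain p where p: "prime p" "odd p" "p dvd x"
      by blast
    obtain q where q: "prime q" "odd q" "f ` residue_class p 0 = residue_class q 0"
      using kirch_homeomorphic_image_multiples[OF f p(1,2)] by blast
    then show "\<exists>q. prime q \<and> odd q \<and> q dvd f x"
      using p(3) kirch_homeomorphic_dvd_iff[OF f q(3) assms(2)] by blast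
  qed
  then show ?thesis
    using power_of_two_iff_no_odd_prime_factor[of x] power_of_two_iff_no_odd_prime_factor[of "f x"]
      kirch_homeomorphic_ge_one[OF f assms(2)] assms(2) by simp
qed

lemma kirch_homeomorphic_two_power_apart_iff:
  assumes f: "homeomorphic_map kirch_topology kirch_topology f" and "1 \<le> x" "1 \<le> y"
  shows "two_power_apart (f x) (f y) \<longleftrightarrow> two_power_apart x y"
proof -
  have "(\<exists>q. prime q \<and> odd q \<and> [f x = f y] (mod q)) \<longleftrightarrow> (\<exists>p. prime p \<and> odd p \<and> [x = y] (mod p))"
  proof
    assume "\<exists>q. prime q \<and> odd q \<and> [f x = f y] (mod q)"
    then obtain q where q: "prime q" "odd q" "[f x = f y] (mod q)"
      by blast
    obtain p where p: "prime p" "odd p" "f ` residue_class p 0 = residue_class q 0"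
      using kirch_homeomorphic_preimage_multiples[OF f q(1,2)] by blast
    then show "\<exists>p. prime p \<and> odd p \<and> [x = y] (mod p)"
      using q(3) kirch_homeomorphic_cong_iff[OF f p(1) q(1) p(3) assms(2,3)] by blast
  next
    assume "\<exists>p. prime p \<and> odd p \<and> [x = y] (mod p)"
    then obtain p where p: "prime p" "odd p" "[x = y] (mod p)"
      by blast
    obtain q where q: "prime q" "odd q" "f ` residue_class p 0 = residue_class q 0"
      using kirch_homeomorphic_image_multiples[OF f p(1,2)] by blast
    then show "\<exists>q. prime q \<and> odd q \<and> [f x = f y] (mod q)"
      using p(3) kirch_homeomorphic_cong_iff[OF f p(1) q(1) q(3) assms(2,3)] by blast
  qed
  moreover have "f x = f y \<longleftrightarrow> x = y"
    using homeomorphic_imp_injective_map[OF f] assms(2,3) by (simp add: topspace_kirch inj_on_eq_iff)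
  ultimately show ?thesis
    by (simp add: two_power_apart_iff_not_cong)
qed

theorem theorem0p1:
  fixes h :: "nat \<Rightarrow> nat"
  assumes "homeomorphic_map kirch_topology kirch_topology h"
  shows "\<forall>x\<in>topspace kirch_topology. h x = x"
proof -
  have "bij_betw h {1..} {1..}"
    using homeomorphic_imp_injective_map[OF assms] homeomorphic_imp_surjective_map[OF assms]
    by (simp add: bij_betw_def topspace_kirch)
  then interpret two_power_automorphism h
    by unfold_locales
      (simp_all add: kirch_homeomorphic_power_of_two_iff[OF assms]
        kirch_homeomorphic_two_power_apart_iff[OF assms])
  show ?thesis
    using fixes_all by (simp add: topspace_kirch)
qed

end
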